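(* There is a finite magma satisfying $\mathrm{x}\simeq\mathrm{y}\diamond((\mathrm{y}\diamond(\mathrm{x}\diamond\mathrm{x}))\diamond\mathrm{y})$ but not $\mathrm{x}\simeq(\mathrm{x}\diamond\mathrm{x})\diamond((\mathrm{x}\diamond\mathrm{x})\diamond\mathrm{x})$. In particular, the first law does not imply the second, even for finite magmas.
   Context: A magma is a set with a binary operation $\diamond$; it satisfies a law if the identity holds for all assignments of the variables to elements of the magma. *)

theory Defs
  imports Main
begin

definition magma :: "'a set \<Rightarrow> ('a \<Rightarrow> 'a \<Rightarrow> 'a) \<Rightarrow> bool" where
  "magma M op \<longleftrightarrow> (\<forall>x\<in>M. \<forall>y\<in>M. op x y \<in> M)"

definition law1 :: "'a set \<Rightarrow> ('a \<Rightarrow> 'a \<Rightarrow> 'a) \<Rightarrow> bool" where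
  "law1 M op \<longleftrightarrow> (\<forall>x\<in>M. \<forall>y\<in>M. x = op y (op (op y (op x x)) y))"

definition law2 :: "'a set \<Rightarrow> ('a \<Rightarrow> 'a \<Rightarrow> 'a) \<Rightarrow> bool" where
  "law2 M op \<longleftrightarrow> (\<forall>x\<in>M. x = op (op x x) (op (op x x) x))"

end

theory Submission
  imports Defs "HOL-Library.Numeral_Type"
begin

text \<open>The magma lives on \<open>\<int>/5 \<times> \<int>/5\<close> with
  \<open>(q, a) \<diamond> (r, b) = (4 + 3q + 4r, 3a + 4b + g q r)\<close>. For \<open>g = 0\<close> both coordinates
  are affine magmas satisfying both laws; for general \<open>g\<close> each law still holds up to an
  additive error in the second coordinate that is linear in \<open>g\<close>. The first law thus
  amounts to 25 homogeneous linear equations on the 25 values of \<open>g\<close>, and \<open>cocycle\<close> is a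
  solution (found by linear algebra over \<open>\<int>/5\<close>) whose error for the second law is nonzero.
  Being finite, the magma can then be copied onto a set of natural numbers.\<close>

lemma iso_law1_law2_iff:
  assumes "bij_betw h M N" and "magma M f"
    and hom: "\<And>x y. x \<in> M \<Longrightarrow> y \<in> M \<Longrightarrow> h (f x y) = op (h x) (h y)"
  shows "law1 M f \<longleftrightarrow> law1 N op" and "law2 M f \<longleftrightarrow> law2 N op"
proof -
  have inj: "inj_on h M" and N: "N = h ` M"
    using assms(1) by (auto simp: bij_betw_def)
  have closed: "\<And>x y. x \<in> M \<Longrightarrow> y \<in> M \<Longrightarrow> f x y \<in> M"
    using assms(2) by (simp add: magma_def)
  have eq_iff: "\<And>x z. x \<in> M \<Longrightarrow> z \<in> M \<Longrightarrow> x = z \<longleftrightarrow> h x = h z"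
    using inj by (auto dest: inj_onD)
  have "law1 M f \<longleftrightarrow> (\<forall>x\<in>M. \<forall>y\<in>M. h x = op (h y) (op (op (h y) (op (h x) (h x))) (h y)))"
    unfolding law1_def by (simp add: eq_iff closed hom)
  also have "\<dots> \<longleftrightarrow> law1 N op"
    unfolding law1_def N by simp
  finally show "law1 M f \<longleftrightarrow> law1 N op" .
  have "law2 M f \<longleftrightarrow> (\<forall>x\<in>M. h x = op (op (h x) (h x)) (op (op (h x) (h x)) (h x)))"
    unfolding law2_def by (simp add: eq_iff closed hom)
  also have "\<dots> \<longleftrightarrow> law2 N op"
    unfolding law2_def N by simp
  finally show "law2 M f \<longleftrightarrow> law2 N op" .
qed

lemma finite_magma_copy_on_nat:
  fixes op :: "'a \<Rightarrow> 'a \<Rightarrow> 'a"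
  assumes "finite N" and "magma N op"
  obtains M :: "nat set" and f where "finite M" and "magma M f"
    and "law1 M f \<longleftrightarrow> law1 N op" and "law2 M f \<longleftrightarrow> law2 N op"
proof -
  define M where "M = {0..<card N}"
  obtain h where h: "bij_betw h M N"
    using ex_bij_betw_nat_finite[OF assms(1)] unfolding M_def by blast
  define f where "f x y = the_inv_into M h (op (h x) (h y))" for x y
  have op_closed: "x \<in> M \<Longrightarrow> y \<in> M \<Longrightarrow> op (h x) (h y) \<in> N" for x y
    using assms(2) h by (auto simp: magma_def bij_betw_def)
  have "magma M f"
    unfolding magma_def f_def
    using h op_closed by (auto simp: bij_betw_def intro: the_inv_into_into)
  moreover have "h (f x y) = op (h x) (h y)" if "x \<in> M" "y \<in> M" for x y
    unfolding f_def using h op_closed[OF that] by (auto simp: bij_betw_def f_the_inv_into_f)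
  ultimately show thesis
    using that[of M f] iso_law1_law2_iff[OF h] by (simp add: M_def)
qed

lemma of_int_mod_5: "(of_int (z mod 5) :: 5) = of_int z"
  by (simp add: bit1.of_int_eq)

lemma numeral_reduce_mod_5: "5 \<le> (numeral n :: int) \<Longrightarrow> (numeral n :: 5) = of_int (numeral n mod 5)"
  by (simp only: of_int_mod_5 of_int_numeral)

lemma exhaust_5: "(q::5) = 0 \<or> q = 1 \<or> q = 2 \<or> q = 3 \<or> q = 4"
proof (induction q rule: bit1_induct)
  case (of_int z)
  then have "z \<in> {0, 1, 2, 3, 4}" by auto
  then show ?case by auto
qed

definition twisted_op :: "(5 \<Rightarrow> 5 \<Rightarrow> 5) \<Rightarrow> 5 \<times> 5 \<Rightarrow> 5 \<times> 5 \<Rightarrow> 5 \<times> 5" where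
  "twisted_op g x y = (4 + 3 * fst x + 4 * fst y, 3 * snd x + 4 * snd y + g (fst x) (fst y))"

definition law1_defect :: "(5 \<Rightarrow> 5 \<Rightarrow> 5) \<Rightarrow> 5 \<Rightarrow> 5 \<Rightarrow> 5" where
  "law1_defect g q r = 3 * g q q + 2 * g r (4 + 2 * q) + 4 * g (3 * q + 3 * r) r + g r (4 + 4 * q + 3 * r)"

definition law2_defect :: "(5 \<Rightarrow> 5 \<Rightarrow> 5) \<Rightarrow> 5 \<Rightarrow> 5" where
  "law2_defect g q = 4 * g (4 + 2 * q) q + g (4 + 2 * q) 1"

lemma twisted_op_law1_rhs:
  fixes g :: "5 \<Rightarrow> 5 \<Rightarrow> 5" and x y :: "5 \<times> 5"
  defines "op \<equiv> twisted_op g"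
  shows "op y (op (op y (op x x)) y) = (fst x, snd x + law1_defect g (fst x) (fst y))"
proof -
  obtain q a r b where x: "x = (q, a)" and y: "y = (r, b)" by fastforce
  have "op x x = (4 + 2 * q, 2 * a + g q q)"
    by (simp add: op_def x twisted_op_def numeral_reduce_mod_5)
  moreover have "op y (4 + 2 * q, 2 * a + g q q)
      = (3 * q + 3 * r, 3 * a + 3 * b + 4 * g q q + g r (4 + 2 * q))"
    by (simp add: op_def y twisted_op_def numeral_reduce_mod_5)
  moreover have "op (3 * q + 3 * r, 3 * a + 3 * b + 4 * g q q + g r (4 + 2 * q)) y
      = (4 + 4 * q + 3 * r, 4 * a + 3 * b + 2 * g q q + 3 * g r (4 + 2 * q) + g (3 * q + 3 * r) r)"
    by (simp add: op_def y twisted_op_def numeral_reduce_mod_5)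
  moreover have "op y (4 + 4 * q + 3 * r, 4 * a + 3 * b + 2 * g q q + 3 * g r (4 + 2 * q) + g (3 * q + 3 * r) r)
      = (q, a + law1_defect g q r)"
    by (simp add: op_def y twisted_op_def law1_defect_def numeral_reduce_mod_5)
  ultimately show ?thesis by (simp add: x y)
qed

lemma twisted_op_law2_rhs:
  fixes g :: "5 \<Rightarrow> 5 \<Rightarrow> 5" and x :: "5 \<times> 5"
  defines "op \<equiv> twisted_op g"
  shows "op (op x x) (op (op x x) x) = (fst x, snd x + law2_defect g (fst x))"
proof -
  obtain q a where x: "x = (q, a)" by fastforce
  have "op x x = (4 + 2 * q, 2 * a + g q q)"
    by (simp add: op_def x twisted_op_def numeral_reduce_mod_5)
  moreover have "op (4 + 2 * q, 2 * a + g q q) x = (1, 3 * g q q + g (4 + 2 * q) q)"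
    by (simp add: op_def x twisted_op_def numeral_reduce_mod_5)
  moreover have "op (4 + 2 * q, 2 * a + g q q) (1, 3 * g q q + g (4 + 2 * q) q) = (q, a + law2_defect g q)"
    by (simp add: op_def twisted_op_def law2_defect_def numeral_reduce_mod_5)
  ultimately show ?thesis by (simp add: x)
qed

lemma law1_twisted_op_iff: "law1 UNIV (twisted_op g) \<longleftrightarrow> (\<forall>q r. law1_defect g q r = 0)"
  unfolding law1_def twisted_op_law1_rhs by (auto simp: prod_eq_iff)

lemma law2_twisted_op_iff: "law2 UNIV (twisted_op g) \<longleftrightarrow> (\<forall>q. law2_defect g q = 0)"
  unfolding law2_def twisted_op_law2_rhs by (auto simp: prod_eq_iff)

definition cocycle :: "5 \<Rightarrow> 5 \<Rightarrow> 5" where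
  "cocycle q r = of_nat ([[0, 0, 0, 2, 0],
                          [4, 1, 2, 1, 0],
                          [0, 3, 0, 0, 1],
                          [0, 2, 3, 0, 0],
                          [0, 1, 0, 0, 0]] ! nat (Rep_bit1 q) ! nat (Rep_bit1 r))"

lemma law1_defect_cocycle: "law1_defect cocycle q r = 0"
  using exhaust_5[of q] exhaust_5[of r]
  by (elim disjE) (simp_all add: law1_defect_def cocycle_def bit1.Rep_numeral bit1.Rep_0 bit1.Rep_1)

lemma law2_defect_cocycle: "law2_defect cocycle 0 = 1"
  by (simp add: law2_defect_def cocycle_def bit1.Rep_numeral bit1.Rep_0 bit1.Rep_1)

theorem mainTheorem4:
  shows "\<exists>(M :: nat set) op. finite M \<and> magma M op \<and> law1 M op \<and> \<not> law2 M op"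
proof -
  have "law1 UNIV (twisted_op cocycle)"
    by (simp add: law1_twisted_op_iff law1_defect_cocycle)
  moreover have "\<not> law2 UNIV (twisted_op cocycle)"
    by (auto simp: law2_twisted_op_iff law2_defect_cocycle intro: exI[of _ 0])
  moreover obtain M :: "nat set" and f where "finite M" "magma M f"
    "law1 M f \<longleftrightarrow> law1 UNIV (twisted_op cocycle)" "law2 M f \<longleftrightarrow> law2 UNIV (twisted_op cocycle)"
    by (rule finite_magma_copy_on_nat[of UNIV "twisted_op cocycle"]) (auto simp: magma_def)
  ultimately show ?thesis by blast
qed

end
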